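(* Let $(\mathbf{i},\mathbf{a})\in I^m\times\mathbb{C}^m$, let $\pi\in S_m$ be $(\mathbf{i},\mathbf{a})$-admissible, and let $1\le k<m$ with $\ell(\pi s_k)<\ell(\pi)$, where $\ell$ is the Coxeter length and $s_k=(k,k+1)$. Then $s_k$ is $(s_k(\mathbf{i}),s_k(\mathbf{a}))$-admissible.
   Context: $I$ is the vertex set of a finite simple bipartite graph $I=I_{\bar0}\sqcup I_{\bar1}$, with every edge oriented from its even to its odd endpoint; write $i\leftarrow j$ if there is an oriented edge from $j$ to $i$. $S_m$ acts on $m$-tuples by $\pi(\mathbf{a})=(a_{\pi^{-1}(1)},\dots,a_{\pi^{-1}(m)})$. For $(\mathbf{i},\mathbf{a})\in I^m\times\mathbb{C}^m$, distinct indices $k,l$ are not $(\mathbf{i},\mathbf{a})$-switchable if $i_k\leftarrow i_l$ and $a_k=a_l+1$ (checked for the pair in either order), and switchable otherwise. $\pi\in S_m$ is $(\mathbf{i},\mathbf{a})$-admissible if for every non-switchable pair $k,l$, $\pi(k),\pi(l)$ are in the same relative order as $k,l$. *)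

theory Defs
  imports "HOL-Combinatorics.Combinatorics" Complex_Main
begin

text \<open>A finite simple bipartite graph on vertex set I = I0 (even) disjoint-union I1 (odd),
  given by a parity predicate (True = odd) and a symmetric irreflexive edge relation,
  all edges joining vertices of different parity.\<close>
definition bipartite_graph :: "'v set \<Rightarrow> ('v \<Rightarrow> bool) \<Rightarrow> ('v \<Rightarrow> 'v \<Rightarrow> bool) \<Rightarrow> bool" where
  "bipartite_graph I par E \<longleftrightarrow> finite I \<and>
     (\<forall>x y. E x y \<longrightarrow> x \<in> I \<and> y \<in> I) \<and>
     (\<forall>x y. E x y \<longrightarrow> E y x) \<and> (\<forall>x. \<not> E x x) \<and>
     (\<forall>x y. E x y \<longrightarrow> par x \<noteq> par y)"

text \<open>Edges oriented from even to odd endpoint; arrow i j means i <- j,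
  i.e. there is an oriented edge from j to i.\<close>
definition arrow :: "('v \<Rightarrow> bool) \<Rightarrow> ('v \<Rightarrow> 'v \<Rightarrow> bool) \<Rightarrow> 'v \<Rightarrow> 'v \<Rightarrow> bool" where
  "arrow par E i j \<longleftrightarrow> E j i \<and> \<not> par j \<and> par i"

text \<open>m-tuples are functions on positions {1..m}; S_m = permutations of {1..m}.
  Action: pi(a) = a o pi^-1.\<close>
definition act :: "(nat \<Rightarrow> nat) \<Rightarrow> (nat \<Rightarrow> 'b) \<Rightarrow> nat \<Rightarrow> 'b" where
  "act \<pi> a = a \<circ> inv \<pi>"

definition switchable ::
  "('v \<Rightarrow> bool) \<Rightarrow> ('v \<Rightarrow> 'v \<Rightarrow> bool) \<Rightarrow> (nat \<Rightarrow> 'v) \<Rightarrow> (nat \<Rightarrow> complex) \<Rightarrow> nat \<Rightarrow> nat \<Rightarrow> bool" where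
  "switchable par E i a k l \<longleftrightarrow>
     \<not> ((arrow par E (i k) (i l) \<and> a k = a l + 1) \<or> (arrow par E (i l) (i k) \<and> a l = a k + 1))"

definition admissible ::
  "('v \<Rightarrow> bool) \<Rightarrow> ('v \<Rightarrow> 'v \<Rightarrow> bool) \<Rightarrow> nat \<Rightarrow> (nat \<Rightarrow> 'v) \<Rightarrow> (nat \<Rightarrow> complex) \<Rightarrow> (nat \<Rightarrow> nat) \<Rightarrow> bool" where
  "admissible par E m i a \<pi> \<longleftrightarrow>
     (\<forall>k\<in>{1..m}. \<forall>l\<in>{1..m}. k \<noteq> l \<and> \<not> switchable par E i a k l \<longrightarrow>
        (k < l \<longleftrightarrow> \<pi> k < \<pi> l))"

definition coxeter_length :: "nat \<Rightarrow> (nat \<Rightarrow> nat) \<Rightarrow> nat" where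
  "coxeter_length m \<pi> = card {(k, l). k \<in> {1..m} \<and> l \<in> {1..m} \<and> k < l \<and> \<pi> k > \<pi> l}"

end

theory Submission
  imports Defs
begin

text \<open>A descent \<open>\<ell>(\<pi> s\<^sub>k) < \<ell>(\<pi>)\<close> means that \<open>\<pi>\<close> inverts the positions \<open>k, k+1\<close>; since an
  admissible permutation preserves the order of every non-switchable pair, \<open>k\<close> and \<open>k+1\<close> are
  switchable. The permutation \<open>s\<^sub>k\<close> reverses only this pair, and acting by \<open>s\<^sub>k\<close> on
  \<open>(\<^bold>i, \<^bold>a)\<close> carries the pair \<open>k, k+1\<close> to itself, so every pair whose order \<open>s\<^sub>k\<close> changes is
  \<open>(s\<^sub>k(\<^bold>i), s\<^sub>k(\<^bold>a))\<close>-switchable.\<close>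

lemma transpose_Suc_less_iff:
  fixes p q k :: nat
  assumes "p \<noteq> q" "{p, q} \<noteq> {k, k+1}"
  shows "Transposition.transpose k (k+1) p < Transposition.transpose k (k+1) q \<longleftrightarrow> p < q"
  using assms by (auto simp: Transposition.transpose_def doubleton_eq_iff)

lemma coxeter_length_le_comp_transpose:
  assumes "1 \<le> k" "k < m" "\<pi> k < \<pi> (k+1)"
  shows "coxeter_length m \<pi> \<le> coxeter_length m (\<pi> \<circ> Transposition.transpose k (k+1))"
proof -
  let ?s = "Transposition.transpose k (k+1)"
  let ?inv = "\<lambda>\<sigma>. {(p, q). p \<in> {1..m} \<and> q \<in> {1..m} \<and> p < q \<and> \<sigma> p > \<sigma> q}"
  let ?f = "\<lambda>(p, q). (?s p, ?s q)"
  have "inj_on ?f (?inv \<pi>)"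
    by (auto simp: inj_on_def dest: transpose_eq_imp_eq)
  have image_inversions: "?f ` ?inv \<pi> \<subseteq> ?inv (\<pi> \<circ> ?s)"
  proof (rule image_subsetI)
    fix x assume "x \<in> ?inv \<pi>"
    then obtain p q where x: "x = (p, q)" and p: "p \<in> {1..m}" and q: "q \<in> {1..m}"
      and "p < q" "\<pi> p > \<pi> q"
      by auto
    then have "{p, q} \<noteq> {k, k+1}"
      using assms(3) by (auto simp: doubleton_eq_iff)
    with \<open>p < q\<close> have "?s p < ?s q"
      using transpose_Suc_less_iff[of p q k] by simp
    moreover have "?s p \<in> {1..m}" "?s q \<in> {1..m}"
      using p q assms(1,2) by (auto simp: Transposition.transpose_def)
    ultimately show "?f x \<in> ?inv (\<pi> \<circ> ?s)"
      using x \<open>\<pi> p > \<pi> q\<close> by simp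
  qed
  have "card (?inv \<pi>) = card (?f ` ?inv \<pi>)"
    using \<open>inj_on ?f (?inv \<pi>)\<close> by (rule card_image[symmetric])
  also have "\<dots> \<le> card (?inv (\<pi> \<circ> ?s))"
    by (rule card_mono[OF _ image_inversions]) (rule finite_subset[of _ "{1..m} \<times> {1..m}"], auto)
  finally show ?thesis
    unfolding coxeter_length_def .
qed

lemma switchable_commute:
  "switchable par E i a l k \<longleftrightarrow> switchable par E i a k l"
  unfolding switchable_def by blast

lemma switchable_act:
  "switchable par E (act \<sigma> i) (act \<sigma> a) p q \<longleftrightarrow> switchable par E i a (inv \<sigma> p) (inv \<sigma> q)"
  unfolding switchable_def act_def by simp

lemma admissible_inversion_switchable:
  assumes "admissible par E m i a \<pi>"
    and "k \<in> {1..m}" "l \<in> {1..m}" "k < l" "\<not> \<pi> k < \<pi> l"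
  shows "switchable par E i a k l"
  using assms unfolding admissible_def by (metis less_irrefl)

theorem lemma5p6:
  fixes I :: "'v set" and par :: "'v \<Rightarrow> bool" and E :: "'v \<Rightarrow> 'v \<Rightarrow> bool"
    and m k :: nat and i :: "nat \<Rightarrow> 'v" and a :: "nat \<Rightarrow> complex" and \<pi> :: "nat \<Rightarrow> nat"
  assumes "bipartite_graph I par E"
    and "\<forall>n\<in>{1..m}. i n \<in> I"
    and "\<pi> permutes {1..m}"
    and "admissible par E m i a \<pi>"
    and "1 \<le> k" and "k < m"
    and "coxeter_length m (\<pi> \<circ> Transposition.transpose k (k+1)) < coxeter_length m \<pi>"
  shows "admissible par E m (act (Transposition.transpose k (k+1)) i)
           (act (Transposition.transpose k (k+1)) a) (Transposition.transpose k (k+1))"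
proof -
  let ?s = "Transposition.transpose k (k+1)"
  have "\<not> \<pi> k < \<pi> (k+1)"
    using coxeter_length_le_comp_transpose[OF assms(5,6)] assms(7) by fastforce
  then have k_switchable: "switchable par E i a k (k+1)"
    using admissible_inversion_switchable[OF assms(4)] assms(5,6) by simp
  have "p < q \<longleftrightarrow> ?s p < ?s q"
    if "p \<noteq> q" and not_switchable: "\<not> switchable par E (act ?s i) (act ?s a) p q" for p q
  proof (cases "{p, q} = {k, k+1}")
    case True
    then have "switchable par E (act ?s i) (act ?s a) p q"
      using k_switchable by (auto simp: switchable_act doubleton_eq_iff switchable_commute)
    with not_switchable show ?thesis by contradiction
  qed (use that transpose_Suc_less_iff in simp)
  then show ?thesis
    unfolding admissible_def by blast
qed

end
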